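(* Let $n$ and $0<n_1<\cdots<n_d<n$ be integers with $m_1=n_1$, $m_k=n_k-n_{k-1}$ ($2\le k\le d$), $m_{d+1}=n-n_d$, and regard $\mathrm{Flag}(n_1,\dots,n_d;n)=\{(VJ_1V^{\mathsf T},\dots,VJ_dV^{\mathsf T}):V\in\mathrm{O}(n)\}$ as a submanifold of $(\mathbb{R}^{n\times n})^d$ with the Frobenius inner product. Let $V(t)$ be a differentiable curve in $\mathrm{O}(n)$ with $\Lambda(t)=V(t)^{\mathsf T}\dot V(t)$ satisfying $\Lambda(k,k)\equiv0$ ($k=1,\dots,d+1$), $c(t)=V(t)(J_1,\dots,J_d)V(t)^{\mathsf T}$, and let $X(t)\in\mathfrak{so}(n)$ be differentiable with $X(k,k)\equiv0$. Let \[ T_3(t)=V(t)\big(\Lambda J_1X+XJ_1\Lambda,\dots,\Lambda J_dX+XJ_d\Lambda\big)V(t)^{\mathsf T}. \] Then the orthogonal projection of $T_3(t)$ onto $\mathbb{T}_{c(t)}\mathrm{Flag}(n_1,\dots,n_d;n)$ equals $V(t)(Z_1(t),\dots,Z_d(t))V(t)^{\mathsf T}$, where $Z_1,\dots,Z_d$ are symmetric with blocks \[ Z_k(p,q)=\begin{cases}-\sum_{1\le l\le d,\ l\ne k}\big(X(k,l)\Lambda(l,d+1)+\Lambda(l,k)^{\mathsf T}X(d+1,l)^{\mathsf T}\big), & p=k,\ q=d+1,\\[2pt] -\sum_{1\le l\le d,\ l\ne k}\big(X(d+1,l)\Lambda(l,k)+\Lambda(l,d+1)^{\mathsf T}X(k,l)^{\mathsf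 T}\big), & p=d+1,\ q=k,\\[2pt] 0, & \text{otherwise}.\end{cases} \]
   Context: $J_k=\operatorname{diag}(-I_{m_1},\dots,-I_{m_{k-1}},I_{m_k},-I_{m_{k+1}},\dots,-I_{m_{d+1}})$. $V(X_1,\dots,X_d)V^{\mathsf T}$ denotes $(VX_1V^{\mathsf T},\dots,VX_dV^{\mathsf T})$. For an $n\times n$ matrix $M$, $M(p,q)$ denotes its $(p,q)$ block in the partition $n=m_1+\cdots+m_{d+1}$. *)

theory Defs
  imports "HOL-Analysis.Analysis"
begin

text \<open>Matrices are n x n real matrices of type real^'n^'n with n = CARD('n).
  The coordinates are ordered by a bijection ix : 'n -> {0..<n}. The partition
  n = m_1 + ... + m_(d+1) is given by thresholds ns 1 < ... < ns d; a d-tuple of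
  matrices is a function nat => matrix, indexed by 1..d and zero elsewhere.\<close>

definition upper :: "nat \<Rightarrow> nat \<Rightarrow> (nat \<Rightarrow> nat) \<Rightarrow> nat \<Rightarrow> nat" where
  "upper n d ns k = (if k \<le> d then ns k else n)"

text \<open>Block index (in 1..d+1) of a coordinate i: the k with n_(k-1) <= ix i < n_k.\<close>
definition blk :: "nat \<Rightarrow> (nat \<Rightarrow> nat) \<Rightarrow> ('n::finite \<Rightarrow> nat) \<Rightarrow> 'n \<Rightarrow> nat" where
  "blk d ns ix i = (LEAST k. 1 \<le> k \<and> ix i < upper CARD('n) d ns k)"

definition Jmat :: "nat \<Rightarrow> (nat \<Rightarrow> nat) \<Rightarrow> ('n::finite \<Rightarrow> nat) \<Rightarrow> nat \<Rightarrow> real^'n^'n" where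
  "Jmat d ns ix k = (\<chi> i j. if i = j then (if blk d ns ix i = k then 1 else -1) else 0)"

definition blockM :: "nat \<Rightarrow> (nat \<Rightarrow> nat) \<Rightarrow> ('n::finite \<Rightarrow> nat) \<Rightarrow> real^'n^'n \<Rightarrow> nat \<Rightarrow> nat \<Rightarrow> real^'n^'n" where
  "blockM d ns ix M p q = (\<chi> i j. if blk d ns ix i = p \<and> blk d ns ix j = q then M $ i $ j else 0)"

definition conj_tuple :: "nat \<Rightarrow> real^'n^'n \<Rightarrow> (nat \<Rightarrow> real^'n^'n) \<Rightarrow> nat \<Rightarrow> real^'n^'n" where
  "conj_tuple d V Xs = (\<lambda>k. if k \<in> {1..d} then V ** Xs k ** transpose V else 0)"

definition flag :: "nat \<Rightarrow> (nat \<Rightarrow> nat) \<Rightarrow> ('n::finite \<Rightarrow> nat) \<Rightarrow> (nat \<Rightarrow> real^'n^'n) set" where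
  "flag d ns ix = {conj_tuple d V (Jmat d ns ix) | V. orthogonal_matrix V}"

definition tangent_space :: "(nat \<Rightarrow> real^'n^'n) set \<Rightarrow> (nat \<Rightarrow> real^'n^'n) \<Rightarrow> (nat \<Rightarrow> real^'n^'n) set" where
  "tangent_space S c = {D. \<exists>\<gamma>. (\<forall>t. \<gamma> t \<in> S) \<and> \<gamma> 0 = c \<and>
       (\<forall>k. ((\<lambda>t. \<gamma> t k) has_vector_derivative D k) (at 0))}"

text \<open>Frobenius inner product on d-tuples (inner on real^'n^'n is the Frobenius product).\<close>
definition tup_inner :: "nat \<Rightarrow> (nat \<Rightarrow> real^'n^'n) \<Rightarrow> (nat \<Rightarrow> real^'n^'n) \<Rightarrow> real" where
  "tup_inner d A B = (\<Sum>k=1..d. inner (A k) (B k))"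

definition orth_proj :: "nat \<Rightarrow> (nat \<Rightarrow> real^'n^'n) set \<Rightarrow> (nat \<Rightarrow> real^'n^'n) \<Rightarrow> (nat \<Rightarrow> real^'n^'n)" where
  "orth_proj d S y = (THE p. p \<in> S \<and> (\<forall>u\<in>S. tup_inner d (y - p) u = 0))"

definition Zmat :: "nat \<Rightarrow> (nat \<Rightarrow> nat) \<Rightarrow> ('n::finite \<Rightarrow> nat) \<Rightarrow> real^'n^'n \<Rightarrow> real^'n^'n \<Rightarrow> nat \<Rightarrow> real^'n^'n" where
  "Zmat d ns ix Lam X k = (let B = blockM d ns ix in
     (\<chi> i j.
       if blk d ns ix i = k \<and> blk d ns ix j = d + 1 then
         (- (\<Sum>l\<in>{1..d} - {k}. B X k l ** B Lam l (d+1)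
                 + transpose (B Lam l k) ** transpose (B X (d+1) l))) $ i $ j
       else if blk d ns ix i = d + 1 \<and> blk d ns ix j = k then
         (- (\<Sum>l\<in>{1..d} - {k}. B X (d+1) l ** B Lam l k
                 + transpose (B Lam l (d+1)) ** transpose (B X k l))) $ i $ j
       else 0))"

end

theory Submission
  imports Defs
begin

(* Tangent vectors at V (J_1, ..., J_d) V^T have the form V (E_1, ..., E_d) V^T: differentiating
   M_k^2 = I and (M_k + I)(M_q + I) = 0 along a curve M_k = U J_k U^T gives
   E_k J_k + J_k E_k = 0 and E_k (J_q + I) + (J_k + I) E_q = 0, i.e. E_k lives on the blocks
   (k,q), (q,k) with q <> k, and E_k(k,q) = -E_q(k,q) for q <= d. Conversely, for skew Om the
   Cayley curve V (I + s Om/2)(I - s Om/2)^-1 shows that V (Om J_k - J_k Om) V^T is tangent.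
   With G = Lam X + X Lam, the vanishing diagonal blocks of Lam and X make the (p,q) block of
   Lam J_k X + X J_k Lam equal to -G(p,q) whenever p = k or q = k, while Z_k is -G on the blocks
   (k,d+1), (d+1,k) and zero elsewhere. So Z_k = Om J_k - J_k Om for Om = G/2 on the blocks
   (p,d+1) and -G/2 on (d+1,p), making V Z V^T tangent; and pairing E_k(k,q) with E_q(k,q)
   shows that T_3 - V Z V^T is orthogonal to all tangent vectors. *)

section \<open>Matrix calculus\<close>

lemma bounded_bilinear_matrix_mult:
  "bounded_bilinear ((**) :: real^'n^'m \<Rightarrow> real^'p^'n \<Rightarrow> real^'p^'m)"
proof -
  have "bilinear ((**) :: real^'n^'m \<Rightarrow> real^'p^'n \<Rightarrow> real^'p^'m)"
    unfolding bilinear_def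
    by (auto intro!: linearI simp: matrix_add_ldistrib matrix_scalar_ac scalar_matrix_assoc
        matrix_matrix_mult_def vec_eq_iff sum.distrib sum_distrib_left algebra_simps)
  then show ?thesis
    using bilinear_conv_bounded_bilinear by blast
qed

interpretation matrix_mult: bounded_bilinear "(**) :: real^'n^'m \<Rightarrow> real^'p^'n \<Rightarrow> real^'p^'m"
  by (rule bounded_bilinear_matrix_mult)

lemma matrix_mult_entry: "(A ** B) $ i $ j = (\<Sum>r\<in>UNIV. A $ i $ r * B $ r $ j)"
  by (simp add: matrix_matrix_mult_def)

lemma bounded_linear_transpose: "bounded_linear (transpose :: real^'n^'m \<Rightarrow> real^'m^'n)"
  by (auto intro!: linearI simp: linear_conv_bounded_linear[symmetric] transpose_def vec_eq_iff)

lemma matrix_transpose_add: "transpose (A + B) = transpose A + transpose (B::'a::ring_1^'n^'m)"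
  by (simp add: transpose_def vec_eq_iff)

lemma inner_matrix_entries: "inner A B = (\<Sum>i\<in>UNIV. \<Sum>j\<in>UNIV. A $ i $ j * B $ i $ j)"
  for A B :: "real^'n^'m"
  by (simp add: inner_vec_def)

lemma inner_matrix_trace: "inner A B = trace (transpose A ** B)" for A B :: "real^'n^'m"
  unfolding inner_matrix_entries trace_def matrix_matrix_mult_def transpose_def
  by simp (rule sum.swap)

lemma inner_matrix_mult_sandwich:
  fixes A :: "real^'n^'m" and B :: "real^'p^'n" and C :: "real^'q^'p"
  shows "inner (A ** B ** C) D = inner B (transpose A ** D ** transpose C)"
proof -
  have "inner (A ** B ** C) D = trace (transpose C ** (transpose B ** (transpose A ** D)))"
    by (simp add: inner_matrix_trace matrix_transpose_mul matrix_mul_assoc)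
  also have "\<dots> = trace ((transpose B ** (transpose A ** D)) ** transpose C)"
    by (rule trace_mul_sym)
  also have "\<dots> = inner B (transpose A ** D ** transpose C)"
    by (simp add: inner_matrix_trace matrix_mul_assoc)
  finally show ?thesis .
qed

lemma matrix_mult_const_derivative:
  fixes A :: "real \<Rightarrow> real^'n^'m" and B :: "real \<Rightarrow> real^'p^'n"
  assumes "\<And>s. A s ** B s = K"
    and "(A has_vector_derivative A') (at t)" and "(B has_vector_derivative B') (at t)"
  shows "A t ** B' + A' ** B t = 0"
proof -
  have "((\<lambda>s. K) has_vector_derivative A t ** B' + A' ** B t) (at t)"
    using matrix_mult.has_vector_derivative[OF assms(2,3)] by (simp add: assms(1))
  then show ?thesis
    using has_vector_derivative_const vector_derivative_unique_at by blast
qed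

lemma orthogonal_curve_skew:
  fixes V :: "real \<Rightarrow> real^'n^'n"
  assumes "\<And>s. orthogonal_matrix (V s)" and "(V has_vector_derivative V') (at t)"
  shows "transpose (transpose (V t) ** V') = - (transpose (V t) ** V')"
proof -
  have "transpose (V s) ** V s = mat 1" for s
    using assms(1) by (simp add: orthogonal_matrix_def)
  moreover have "((\<lambda>s. transpose (V s)) has_vector_derivative transpose V') (at t)"
    using bounded_linear.has_vector_derivative[OF bounded_linear_transpose assms(2)] .
  ultimately have "transpose (V t) ** V' + transpose V' ** V t = 0"
    by (rule matrix_mult_const_derivative[OF _ _ assms(2)])
  then show ?thesis
    by (simp add: matrix_transpose_mul eq_neg_iff_add_eq_0 add.commute)
qed

lemma norm_matrix_le_entry_bound:
  fixes A :: "real^'n^'m" and c :: real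
  assumes "\<And>i j. \<bar>A $ i $ j\<bar> \<le> c"
  shows "norm A \<le> real (CARD('m) * CARD('n)) * c"
proof -
  have "norm A \<le> (\<Sum>i\<in>UNIV. norm (A $ i))"
    unfolding norm_vec_def by (rule L2_set_le_sum) simp
  also have "\<dots> \<le> (\<Sum>i\<in>UNIV. \<Sum>j\<in>UNIV. \<bar>A $ i $ j\<bar>)"
    by (intro sum_mono norm_le_l1_cart)
  also have "\<dots> \<le> (\<Sum>i\<in>(UNIV::'m set). \<Sum>j\<in>(UNIV::'n set). c)"
    by (intro sum_mono assms)
  finally show ?thesis
    by simp
qed

section \<open>The Cayley transform\<close>

lemma skew_quadratic_form_eq_zero:
  fixes Om :: "real^'n^'n"
  assumes "transpose Om = - Om"
  shows "inner v (Om *v v) = 0"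
proof -
  have "inner v (Om *v v) = inner (transpose Om *v v) v"
    by (simp add: dot_lmul_matrix[symmetric] inner_commute)
  also have "transpose Om *v v = - (Om *v v)"
    using assms by (simp add: vec_eq_iff matrix_vector_mult_def sum_negf)
  also have "inner (- (Om *v v)) v = - inner v (Om *v v)"
    by (simp add: inner_commute)
  finally show ?thesis
    by simp
qed

lemma norm_le_cayley_factor:
  fixes Om :: "real^'n^'n"
  assumes "transpose Om = - Om"
  shows "norm v \<le> norm ((mat 1 - c *\<^sub>R Om) *v v)"
proof -
  have "(mat 1 - c *\<^sub>R Om) *v v = v - c *\<^sub>R (Om *v v)"
    by (simp add: algebra_simps scaleR_matrix_vector_assoc)
  then have "inner ((mat 1 - c *\<^sub>R Om) *v v) ((mat 1 - c *\<^sub>R Om) *v v)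
      = inner v v + c\<^sup>2 * inner (Om *v v) (Om *v v)"
    using skew_quadratic_form_eq_zero[OF assms, of v]
    by (simp add: inner_diff_left inner_diff_right inner_commute power2_eq_square)
  then show ?thesis
    by (simp add: norm_le)
qed

lemma cayley_factor_inverse:
  fixes Om :: "real^'n^'n"
  assumes "transpose Om = - Om"
  obtains N where "(mat 1 - c *\<^sub>R Om) ** N = mat 1" "\<And>i j. \<bar>N $ i $ j\<bar> \<le> 1"
proof -
  let ?A = "mat 1 - c *\<^sub>R Om"
  have "\<forall>v. ?A *v v = 0 \<longrightarrow> v = 0"
    using norm_le_cayley_factor[OF assms] by (metis norm_eq_zero norm_le_zero_iff)
  then obtain N where "N ** ?A = mat 1"
    using matrix_left_invertible_ker by blast
  then have right: "?A ** N = mat 1"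
    using matrix_left_right_inverse by blast
  have "\<bar>N $ i $ j\<bar> \<le> 1" for i j
  proof -
    have "\<bar>N $ i $ j\<bar> = \<bar>(N *v axis j 1) $ i\<bar>"
      by (simp add: matrix_vector_mult_def axis_def if_distrib if_distribR sum.delta' cong: if_cong)
    also have "\<dots> \<le> norm (N *v axis j 1)"
      by (rule component_le_norm_cart)
    also have "\<dots> \<le> norm (?A *v (N *v axis j 1))"
      by (rule norm_le_cayley_factor[OF assms])
    also have "\<dots> = 1"
      using right by (simp add: matrix_vector_mul_assoc)
    finally show ?thesis .
  qed
  then show ?thesis
    using that right by blast
qed

lemma has_vector_derivative_at_0_quadratic_remainder:
  fixes C R :: "real \<Rightarrow> 'a::real_normed_vector"
  assumes C: "\<And>s. C s - C 0 - s *\<^sub>R D = (s * s) *\<^sub>R R s" and R: "\<And>s. norm (R s) \<le> B"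
  shows "(C has_vector_derivative D) (at 0)"
proof -
  have "norm (norm (C s - C 0 - (s - 0) *\<^sub>R D) / norm (s - 0)) \<le> norm s * B" for s
  proof -
    have "norm (norm (C s - C 0 - (s - 0) *\<^sub>R D) / norm (s - 0)) = \<bar>s\<bar> * norm (R s)"
      using C[of s] by (cases "s = 0") (simp_all add: abs_mult field_simps)
    then show ?thesis
      using R[of s] by (simp add: mult_left_mono)
  qed
  then have "((\<lambda>s. norm (C s - C 0 - (s - 0) *\<^sub>R D) / norm (s - 0)) \<longlongrightarrow> 0) (at 0)"
    by (intro tendsto_0_le[OF tendsto_ident_at, where K = B] always_eventually allI)
  then show ?thesis
    unfolding has_vector_derivative_def has_derivative_iff_norm
    by (simp add: bounded_linear_scaleR_left)
qed

lemma cayley_transform_orthogonal: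
  fixes Om :: "real^'n^'n"
  assumes skew: "transpose Om = - Om" and inv: "(mat 1 - c *\<^sub>R Om) ** N = mat 1"
  shows "orthogonal_matrix ((mat 1 + c *\<^sub>R Om) ** N)"
proof -
  let ?A = "mat 1 - c *\<^sub>R Om" and ?P = "mat 1 + c *\<^sub>R Om"
  have AP: "?A ** ?P = ?P ** ?A"
    by (simp add: matrix_mult.add_left matrix_mult.add_right
        matrix_mult.diff_left matrix_mult.diff_right algebra_simps)
  have P_transpose: "transpose ?P = ?A"
    using skew by (simp add: matrix_transpose_add transpose_scalar)
  have "transpose (?P ** N) ** (?P ** N) = transpose N ** (?A ** ?P) ** N"
    by (simp add: matrix_transpose_mul P_transpose matrix_mul_assoc)
  also have "\<dots> = transpose N ** ?P ** (?A ** N)"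
    unfolding AP by (simp only: matrix_mul_assoc)
  also have "\<dots> = transpose (transpose ?P ** N)"
    by (simp add: inv matrix_transpose_mul)
  finally show ?thesis
    by (simp add: orthogonal_matrix P_transpose inv)
qed

lemma cayley_curve:
  fixes Om :: "real^'n^'n"
  assumes skew: "transpose Om = - Om"
  obtains C where "\<And>s. orthogonal_matrix (C s)" "C 0 = mat 1"
    "(C has_vector_derivative Om) (at 0)"
proof -
  have "\<forall>s. \<exists>N. (mat 1 - (s/2) *\<^sub>R Om) ** N = mat 1 \<and> (\<forall>i j. \<bar>N $ i $ j\<bar> \<le> 1)"
    by (metis cayley_factor_inverse[OF skew])
  then obtain N where N_inv: "\<And>s. (mat 1 - (s/2) *\<^sub>R Om) ** N s = mat 1"
    and N_entries: "\<And>s i j. \<bar>N s $ i $ j\<bar> \<le> 1"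
    by metis
  define C where "C s = (mat 1 + (s/2) *\<^sub>R Om) ** N s" for s
  define R where "R s = (1/2) *\<^sub>R (Om ** Om ** N s)" for s
  have N_eq: "N s = mat 1 + (s/2) *\<^sub>R (Om ** N s)" for s
    using N_inv[of s] by (simp add: matrix_mult.diff_left matrix_mult.scaleR_left algebra_simps)
  have C0: "C 0 = mat 1"
    using N_inv[of 0] by (simp add: C_def)
  have "C s - C 0 - s *\<^sub>R Om = (s * s) *\<^sub>R R s" for s
  proof -
    have "C s = N s + (s/2) *\<^sub>R (Om ** N s)"
      by (simp add: C_def matrix_mult.add_left matrix_mult.scaleR_left)
    also have "\<dots> = mat 1 + s *\<^sub>R (Om ** N s)"
      using N_eq[of s] by (metis add.assoc scaleR_add_left field_sum_of_halves)
    also have "Om ** N s = Om + s *\<^sub>R R s"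
      by (subst N_eq) (simp add: R_def matrix_mult.add_right matrix_mult.scaleR_right
          matrix_mul_assoc)
    finally show ?thesis
      using C0 by (simp add: algebra_simps)
  qed
  moreover obtain K where K: "\<And>a b. norm ((a :: real^'n^'n) ** (b :: real^'n^'n)) \<le> norm a * norm b * K"
    "K > 0"
    using matrix_mult.pos_bounded by blast
  have "norm (R s) \<le> norm (Om ** Om) * real (CARD('n) * CARD('n)) * K" for s
  proof -
    have "norm (R s) \<le> norm (Om ** Om ** N s)"
      by (simp add: R_def)
    also have "\<dots> \<le> norm (Om ** Om) * norm (N s) * K"
      by (rule K(1))
    also have "\<dots> \<le> norm (Om ** Om) * real (CARD('n) * CARD('n)) * K"
      using norm_matrix_le_entry_bound[OF N_entries, of s] K(2)
      by (intro mult_right_mono mult_left_mono) auto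
    finally show ?thesis .
  qed
  ultimately have "(C has_vector_derivative Om) (at 0)"
    by (rule has_vector_derivative_at_0_quadratic_remainder)
  moreover have "orthogonal_matrix (C s)" for s
    unfolding C_def by (rule cayley_transform_orthogonal[OF skew N_inv])
  ultimately show ?thesis
    using that C0 by blast
qed

section \<open>Block structure and the matrices J_k\<close>

lemma blk_bounds:
  assumes "bij_betw ix UNIV {..<CARD('n)}"
  shows "blk d ns (ix::'n::finite \<Rightarrow> nat) i \<in> {1..d+1}"
proof -
  let ?P = "\<lambda>k. 1 \<le> k \<and> ix i < upper CARD('n) d ns k"
  have "?P (d+1)"
    using assms by (auto simp: upper_def bij_betw_def)
  then show ?thesis
    unfolding blk_def using LeastI[of ?P] Least_le[of ?P] by auto
qed

lemma blockM_entry_eq_zero: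
  assumes "blockM d ns ix M p q = 0" "blk d ns ix i = p" "blk d ns ix j = q"
  shows "M $ i $ j = 0"
proof -
  have "blockM d ns ix M p q $ i $ j = 0"
    using assms(1) by simp
  then show ?thesis
    using assms(2,3) by (simp add: blockM_def)
qed

lemma transpose_blockM: "transpose (blockM d ns ix M p q) = blockM d ns ix (transpose M) q p"
  by (simp add: blockM_def transpose_def vec_eq_iff)

lemma blockM_uminus: "blockM d ns ix (- M) p q = - blockM d ns ix M p q"
  by (simp add: blockM_def vec_eq_iff)

lemma sum_blockM_mult_entry:
  assumes "finite L" "blk d ns ix i = p" "blk d ns ix j = q"
    and "\<And>r. blk d ns ix r \<notin> L \<Longrightarrow> M $ i $ r * N $ r $ j = 0"
  shows "(\<Sum>l\<in>L. blockM d ns ix M p l ** blockM d ns ix N l q) $ i $ j = (M ** N) $ i $ j"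
proof -
  let ?b = "blk d ns ix"
  have "(\<Sum>l\<in>L. blockM d ns ix M p l ** blockM d ns ix N l q) $ i $ j
      = (\<Sum>l\<in>L. \<Sum>r\<in>UNIV. if ?b r = l then M $ i $ r * N $ r $ j else 0)"
    unfolding sum_component matrix_mult_entry
    using assms(2,3) by (intro sum.cong refl) (simp add: blockM_def)
  also have "\<dots> = (\<Sum>r\<in>UNIV. \<Sum>l\<in>L. if ?b r = l then M $ i $ r * N $ r $ j else 0)"
    by (rule sum.swap)
  also have "\<dots> = (\<Sum>r\<in>UNIV. M $ i $ r * N $ r $ j)"
    using assms(1,4) by (intro sum.cong) (auto simp: sum.delta)
  finally show ?thesis
    by (simp add: matrix_mult_entry)
qed

lemma matrix_mult_Jmat_entry:
  "(A ** Jmat d ns ix k) $ i $ j = A $ i $ j * (if blk d ns ix j = k then 1 else -1)"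
proof -
  have "(A ** Jmat d ns ix k) $ i $ j
      = (\<Sum>r\<in>UNIV. if r = j then A $ i $ r * (if blk d ns ix r = k then 1 else -1) else 0)"
    unfolding matrix_matrix_mult_def Jmat_def vec_lambda_beta by (rule sum.cong) auto
  then show ?thesis by simp
qed

lemma Jmat_matrix_mult_entry:
  "(Jmat d ns ix k ** A) $ i $ j = (if blk d ns ix i = k then 1 else -1) * A $ i $ j"
proof -
  have "(Jmat d ns ix k ** A) $ i $ j
      = (\<Sum>r\<in>UNIV. if i = r then (if blk d ns ix r = k then 1 else -1) * A $ r $ j else 0)"
    unfolding matrix_matrix_mult_def Jmat_def vec_lambda_beta by (rule sum.cong) auto
  then show ?thesis by simp
qed

lemma Jmat_square: "Jmat d ns ix k ** Jmat d ns ix k = mat 1"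
  by (simp add: vec_eq_iff matrix_mult_Jmat_entry) (simp add: Jmat_def mat_def)

lemma Jmat_plus_one_mult:
  "k \<noteq> q \<Longrightarrow> (Jmat d ns ix k + mat 1) ** (Jmat d ns ix q + mat 1) = 0"
  by (simp add: vec_eq_iff matrix_mult.add_left matrix_mult.add_right matrix_mult_Jmat_entry)
    (simp add: Jmat_def mat_def)

lemma anticommute_Jmat_entry:
  assumes "E ** Jmat d ns ix k + Jmat d ns ix k ** E = 0"
    and "blk d ns ix i = k \<longleftrightarrow> blk d ns ix j = k"
  shows "E $ i $ j = 0"
proof -
  have "(E ** Jmat d ns ix k + Jmat d ns ix k ** E) $ i $ j = 0"
    using assms(1) by simp
  then show ?thesis
    using assms(2) by (simp add: matrix_mult_Jmat_entry Jmat_matrix_mult_entry split: if_splits)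
qed

lemma Jmat_plus_one_pair_entry:
  assumes "E ** (Jmat d ns ix q + mat 1) + (Jmat d ns ix k + mat 1) ** F = 0"
    and "blk d ns ix i = k" "blk d ns ix j = q"
  shows "E $ i $ j + F $ i $ j = 0"
proof -
  have "(E ** (Jmat d ns ix q + mat 1) + (Jmat d ns ix k + mat 1) ** F) $ i $ j = 0"
    using assms(1) by simp
  then show ?thesis
    using assms(2,3)
    by (simp add: matrix_mult.add_left matrix_mult.add_right matrix_mult_Jmat_entry
        Jmat_matrix_mult_entry)
qed

lemma Jmat_sandwich_entry:
  assumes "\<And>r. blk d ns ix r = k \<Longrightarrow> M $ i $ r * N $ r $ j = 0"
  shows "(M ** Jmat d ns ix k ** N) $ i $ j = - (M ** N) $ i $ j"
proof -
  have "(M ** Jmat d ns ix k) $ i $ r * N $ r $ j = - (M $ i $ r * N $ r $ j)" for r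
    using assms[of r] by (cases "blk d ns ix r = k") (simp_all add: matrix_mult_Jmat_entry)
  then show ?thesis
    unfolding matrix_mult_entry[of "M ** Jmat d ns ix k"] matrix_mult_entry[of M]
    by (simp add: sum_negf)
qed

section \<open>Tangent vectors of the flag manifold\<close>

lemma orthogonal_conj_mult:
  fixes U :: "real^'n^'n"
  assumes "orthogonal_matrix U"
  shows "(U ** A ** transpose U) ** (U ** B ** transpose U) = U ** (A ** B) ** transpose U"
proof -
  have "(U ** A ** transpose U) ** (U ** B ** transpose U) = U ** A ** (transpose U ** U) ** B ** transpose U"
    by (simp add: matrix_mul_assoc)
  also have "\<dots> = U ** (A ** B) ** transpose U"
    using assms by (simp add: orthogonal_matrix matrix_mul_assoc)
  finally show ?thesis .
qed

lemma orthogonal_conj_add_one: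
  fixes U :: "real^'n^'n"
  assumes "orthogonal_matrix U"
  shows "U ** A ** transpose U + mat 1 = U ** (A + mat 1) ** transpose U"
  using assms by (simp add: orthogonal_matrix_def matrix_mult.add_left matrix_mult.add_right)

lemma commutator_in_tangent_space_flag:
  fixes V Om :: "real^'n^'n"
  assumes V: "orthogonal_matrix V" and skew: "transpose Om = - Om"
  shows "conj_tuple d V (\<lambda>k. Om ** Jmat d ns ix k - Jmat d ns ix k ** Om)
    \<in> tangent_space (flag d ns ix) (conj_tuple d V (Jmat d ns ix))"
proof -
  obtain C where C: "\<And>s. orthogonal_matrix (C s)" "C 0 = mat 1" "(C has_vector_derivative Om) (at 0)"
    using cayley_curve[OF skew] by blast
  define W where "W s = V ** C s" for s
  have W0: "W 0 = V"
    using C(2) by (simp add: W_def)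
  have W': "(W has_vector_derivative V ** Om) (at 0)"
    unfolding W_def by (rule matrix_mult.has_vector_derivative[OF has_vector_derivative_const C(3), simplified])
  have "((\<lambda>s. conj_tuple d (W s) (Jmat d ns ix) k) has_vector_derivative
      conj_tuple d V (\<lambda>k. Om ** Jmat d ns ix k - Jmat d ns ix k ** Om) k) (at 0)" for k
  proof (cases "k \<in> {1..d}")
    case True
    let ?J = "Jmat d ns ix k"
    have "((\<lambda>s. W s ** ?J) has_vector_derivative V ** Om ** ?J) (at 0)"
      by (rule bounded_linear.has_vector_derivative[OF matrix_mult.bounded_linear_left W'])
    moreover have "((\<lambda>s. transpose (W s)) has_vector_derivative transpose (V ** Om)) (at 0)"
      by (rule bounded_linear.has_vector_derivative[OF bounded_linear_transpose W'])
    ultimately have "((\<lambda>s. W s ** ?J ** transpose (W s)) has_vector_derivative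
        W 0 ** ?J ** transpose (V ** Om) + V ** Om ** ?J ** transpose (W 0)) (at 0)"
      by (rule matrix_mult.has_vector_derivative)
    also have "W 0 ** ?J ** transpose (V ** Om) + V ** Om ** ?J ** transpose (W 0)
        = V ** (Om ** ?J - ?J ** Om) ** transpose V"
      using skew by (simp add: W0 matrix_transpose_mul matrix_mult.diff_left matrix_mult.diff_right
          matrix_mul_assoc matrix_mult.minus_left matrix_mult.minus_right)
    finally show ?thesis
      using True by (simp add: conj_tuple_def)
  qed (simp add: conj_tuple_def del: atLeastAtMost_iff)
  moreover have "conj_tuple d (W s) (Jmat d ns ix) \<in> flag d ns ix" for s
    unfolding flag_def W_def using orthogonal_matrix_mul[OF V C(1)] by blast
  ultimately show ?thesis
    unfolding tangent_space_def using W0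
    by (intro CollectI exI[where x = "\<lambda>s. conj_tuple d (W s) (Jmat d ns ix)"]) simp
qed

lemma tangent_space_flag_vanishes:
  assumes "u \<in> tangent_space (flag d ns ix) c" and "k \<notin> {1..d}"
  shows "u k = 0"
proof -
  obtain \<gamma> where \<gamma>: "\<And>s. \<gamma> s \<in> flag d ns ix" "((\<lambda>s. \<gamma> s k) has_vector_derivative u k) (at 0)"
    using assms(1) unfolding tangent_space_def by blast
  have "\<gamma> s k = 0" for s
  proof -
    obtain W where "\<gamma> s = conj_tuple d W (Jmat d ns ix)"
      using \<gamma>(1)[of s] unfolding flag_def by blast
    then show ?thesis
      using assms(2) by (simp add: conj_tuple_def del: atLeastAtMost_iff)
  qed
  then have "((\<lambda>s. 0) has_vector_derivative u k) (at 0)"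
    using \<gamma>(2) by simp
  then show ?thesis
    using has_vector_derivative_const vector_derivative_unique_at by blast
qed

lemma tangent_space_flag_curve:
  fixes V :: "real^'n^'n"
  assumes V: "orthogonal_matrix V"
    and u: "u \<in> tangent_space (flag d ns ix) (conj_tuple d V (Jmat d ns ix))"
  obtains U where "\<And>s. orthogonal_matrix (U s)"
    and "\<And>k. k \<in> {1..d} \<Longrightarrow> U 0 ** Jmat d ns ix k ** transpose (U 0) = Jmat d ns ix k"
    and "\<And>k. k \<in> {1..d} \<Longrightarrow> ((\<lambda>s. U s ** Jmat d ns ix k ** transpose (U s))
          has_vector_derivative transpose V ** u k ** V) (at 0)"
proof -
  obtain \<gamma> where \<gamma>: "\<And>s. \<gamma> s \<in> flag d ns ix" "\<gamma> 0 = conj_tuple d V (Jmat d ns ix)"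
    "\<And>k. ((\<lambda>s. \<gamma> s k) has_vector_derivative u k) (at 0)"
    using u unfolding tangent_space_def by blast
  have "\<forall>s. \<exists>W. orthogonal_matrix W \<and> \<gamma> s = conj_tuple d W (Jmat d ns ix)"
    using \<gamma>(1) unfolding flag_def by blast
  then obtain W where W: "\<And>s. orthogonal_matrix (W s)" "\<And>s. \<gamma> s = conj_tuple d (W s) (Jmat d ns ix)"
    by metis
  define U where "U s = transpose V ** W s" for s
  have conj_U: "U s ** Jmat d ns ix k ** transpose (U s) = transpose V ** \<gamma> s k ** V"
    if "k \<in> {1..d}" for k s
    using that by (simp add: U_def W(2) conj_tuple_def matrix_transpose_mul matrix_mul_assoc)
  have "orthogonal_matrix (U s)" for s
    unfolding U_def using V W(1) by (simp add: orthogonal_matrix_mul)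
  moreover have "U 0 ** Jmat d ns ix k ** transpose (U 0) = Jmat d ns ix k" if "k \<in> {1..d}" for k
    using V that unfolding conj_U[OF that] \<gamma>(2)
    by (simp add: conj_tuple_def orthogonal_matrix_def matrix_mul_assoc)
      (simp add: matrix_mul_assoc[symmetric])
  moreover have "((\<lambda>s. U s ** Jmat d ns ix k ** transpose (U s))
      has_vector_derivative transpose V ** u k ** V) (at 0)" if "k \<in> {1..d}" for k
    unfolding conj_U[OF that]
    by (intro bounded_linear.has_vector_derivative[OF matrix_mult.bounded_linear_left]
        bounded_linear.has_vector_derivative[OF matrix_mult.bounded_linear_right] \<gamma>(3))
  ultimately show ?thesis
    using that by blast
qed

lemma tangent_space_flag_anticommute:
  fixes V :: "real^'n^'n"
  assumes V: "orthogonal_matrix V"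
    and u: "u \<in> tangent_space (flag d ns ix) (conj_tuple d V (Jmat d ns ix))"
    and k: "k \<in> {1..d}"
  shows "(transpose V ** u k ** V) ** Jmat d ns ix k + Jmat d ns ix k ** (transpose V ** u k ** V) = 0"
proof -
  obtain U where U: "\<And>s. orthogonal_matrix (U s)"
    "\<And>k. k \<in> {1..d} \<Longrightarrow> U 0 ** Jmat d ns ix k ** transpose (U 0) = Jmat d ns ix k"
    "\<And>k. k \<in> {1..d} \<Longrightarrow> ((\<lambda>s. U s ** Jmat d ns ix k ** transpose (U s))
        has_vector_derivative transpose V ** u k ** V) (at 0)"
    using tangent_space_flag_curve[OF V u] by blast
  have "(U s ** Jmat d ns ix k ** transpose (U s)) ** (U s ** Jmat d ns ix k ** transpose (U s)) = mat 1"
    for s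
    using U(1)[of s] by (simp add: orthogonal_conj_mult Jmat_square orthogonal_matrix_def)
  from matrix_mult_const_derivative[OF this U(3)[OF k] U(3)[OF k]] show ?thesis
    by (simp add: U(2)[OF k] add.commute)
qed

lemma tangent_space_flag_pair:
  fixes V :: "real^'n^'n"
  assumes V: "orthogonal_matrix V"
    and u: "u \<in> tangent_space (flag d ns ix) (conj_tuple d V (Jmat d ns ix))"
    and kq: "k \<in> {1..d}" "q \<in> {1..d}" "k \<noteq> q"
  shows "(transpose V ** u k ** V) ** (Jmat d ns ix q + mat 1)
    + (Jmat d ns ix k + mat 1) ** (transpose V ** u q ** V) = 0"
proof -
  obtain U where U: "\<And>s. orthogonal_matrix (U s)"
    "\<And>k. k \<in> {1..d} \<Longrightarrow> U 0 ** Jmat d ns ix k ** transpose (U 0) = Jmat d ns ix k"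
    "\<And>k. k \<in> {1..d} \<Longrightarrow> ((\<lambda>s. U s ** Jmat d ns ix k ** transpose (U s))
        has_vector_derivative transpose V ** u k ** V) (at 0)"
    using tangent_space_flag_curve[OF V u] by blast
  define M where "M k s = U s ** Jmat d ns ix k ** transpose (U s) + mat 1" for k s
  have "M k s ** M q s = 0" for s
    using U(1)[of s] kq(3)
    by (simp add: M_def orthogonal_conj_add_one orthogonal_conj_mult Jmat_plus_one_mult)
  moreover have "(M p has_vector_derivative transpose V ** u p ** V) (at 0)" if "p \<in> {1..d}" for p
    unfolding M_def using has_vector_derivative_add[OF U(3)[OF that] has_vector_derivative_const]
    by simp
  ultimately have "M k 0 ** (transpose V ** u q ** V) + (transpose V ** u k ** V) ** M q 0 = 0"
    using kq by (intro matrix_mult_const_derivative) auto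
  then show ?thesis
    using kq by (simp add: M_def U(2) add.commute)
qed

section \<open>Orthogonal projection onto the tangent space\<close>

lemma tup_inner_diff_left: "tup_inner d (a - b) w = tup_inner d a w - tup_inner d b w"
  by (simp add: tup_inner_def inner_diff_left sum_subtractf)

lemma tup_inner_diff_right: "tup_inner d w (a - b) = tup_inner d w a - tup_inner d w b"
  by (simp add: tup_inner_def inner_diff_right sum_subtractf)

lemma orth_proj_eqI:
  assumes P: "P \<in> S" and perp: "\<And>u. u \<in> S \<Longrightarrow> tup_inner d (y - P) u = 0"
    and supp: "\<And>u k. u \<in> S \<Longrightarrow> k \<notin> {1..d} \<Longrightarrow> u k = 0"
  shows "orth_proj d S y = P"
  unfolding orth_proj_def
proof (rule the_equality)
  show "P \<in> S \<and> (\<forall>u\<in>S. tup_inner d (y - P) u = 0)"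
    using P perp by blast
next
  fix p
  assume p: "p \<in> S \<and> (\<forall>u\<in>S. tup_inner d (y - p) u = 0)"
  have perp_diff: "tup_inner d (P - p) w = 0" if "w \<in> S" for w
  proof -
    have "P - p = (y - p) - (y - P)"
      by (simp add: fun_diff_def)
    then show ?thesis
      using p perp that by (simp add: tup_inner_diff_left)
  qed
  have "tup_inner d (P - p) (P - p) = 0"
    using perp_diff[OF P] perp_diff[of p] p by (simp add: tup_inner_diff_right)
  then have "P k = p k" if "k \<in> {1..d}" for k
    using that unfolding tup_inner_def by (subst (asm) sum_nonneg_eq_0_iff) auto
  moreover have "P k = p k" if "k \<notin> {1..d}" for k
    using that supp[OF P] supp[of p] p by simp
  ultimately show "p = P"
    by (metis ext)
qed

(* The contribution of one entry (i,j), lying in the block (p,q), to the inner product of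
   T_3 - V Z V^T with a tangent vector: D k and E k are the (i,j) entries of the k-th components. *)
lemma sum_block_pairing_eq_zero:
  fixes D E :: "nat \<Rightarrow> real"
  assumes pq: "p \<in> {1..d+1}" "q \<in> {1..d+1}"
    and E_zero: "\<And>k. k \<in> {1..d} \<Longrightarrow> (p = k \<longleftrightarrow> q = k) \<Longrightarrow> E k = 0"
    and E_pair: "p \<noteq> q \<Longrightarrow> p \<le> d \<Longrightarrow> q \<le> d \<Longrightarrow> E p + E q = 0"
    and D_pair: "p \<noteq> q \<Longrightarrow> p \<le> d \<Longrightarrow> q \<le> d \<Longrightarrow> D p = D q"
    and D_last: "\<And>k. k \<in> {1..d} \<Longrightarrow> p = k \<and> q = d+1 \<or> p = d+1 \<and> q = k \<Longrightarrow> D k = 0"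
  shows "(\<Sum>k=1..d. D k * E k) = 0"
proof (cases "p \<noteq> q \<and> p \<le> d \<and> q \<le> d")
  case True
  have "(\<Sum>k=1..d. D k * E k) = (\<Sum>k\<in>{p, q}. D k * E k)"
    using True pq E_zero by (intro sum.mono_neutral_right) auto
  also have "\<dots> = D p * (E p + E q)"
    using True D_pair by (simp add: algebra_simps)
  finally show ?thesis
    using True E_pair by simp
next
  case False
  have "D k * E k = 0" if "k \<in> {1..d}" for k
  proof (cases "p = k \<longleftrightarrow> q = k")
    case True
    then show ?thesis
      using E_zero that by simp
  next
    case exactly_one: False
    then have "p = k \<and> q = d+1 \<or> p = d+1 \<and> q = k"
      using False pq that by auto
    then show ?thesis
      using D_last that by simp
  qed
  then show ?thesis
    by (intro sum.neutral) blast
qed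

lemma Zmat_entry:
  fixes Lam X :: "real^'n^'n"
  assumes ix: "bij_betw ix UNIV {..<CARD('n)}" and k: "k \<in> {1..d}"
    and Lam_skew: "transpose Lam = - Lam" and X_skew: "transpose X = - X"
    and Lam_diag: "\<And>a b. blk d ns ix a = blk d ns ix b \<Longrightarrow> Lam $ a $ b = 0"
    and X_diag: "\<And>a b. blk d ns ix a = blk d ns ix b \<Longrightarrow> X $ a $ b = 0"
  shows "Zmat d ns ix Lam X k $ i $ j =
    (if blk d ns ix i = k \<and> blk d ns ix j = d+1 \<or> blk d ns ix i = d+1 \<and> blk d ns ix j = k
     then - (X ** Lam + Lam ** X) $ i $ j else 0)"
proof (cases "blk d ns ix i = k \<and> blk d ns ix j = d+1 \<or> blk d ns ix i = d+1 \<and> blk d ns ix j = k")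
  case True
  let ?b = "blk d ns ix" and ?B = "blockM d ns ix" and ?L = "{1..d} - {k}"
  define p q where "p = ?b i" and "q = ?b j"
  have pq: "p = k \<and> q = d+1 \<or> p = d+1 \<and> q = k"
    using True by (simp add: p_def q_def)
  have Z: "Zmat d ns ix Lam X k $ i $ j = - (\<Sum>l\<in>?L. ?B X p l ** ?B Lam l q
      + transpose (?B Lam l p) ** transpose (?B X q l)) $ i $ j"
    using pq k by (auto simp: Zmat_def Let_def p_def q_def)
  have T: "transpose (?B Lam l p) ** transpose (?B X q l) = ?B Lam p l ** ?B X l q" for l
    using Lam_skew X_skew
    by (simp add: transpose_blockM blockM_uminus matrix_mult.minus_left matrix_mult.minus_right)
  have S: "(\<Sum>l\<in>?L. ?B M p l ** ?B N l q) $ i $ j = (M ** N) $ i $ j"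
    if M_diag: "\<And>a b. ?b a = ?b b \<Longrightarrow> M $ a $ b = 0"
      and N_diag: "\<And>a b. ?b a = ?b b \<Longrightarrow> N $ a $ b = 0" for M N :: "real^'n^'n"
  proof (rule sum_blockM_mult_entry)
    fix r
    assume "?b r \<notin> ?L"
    then have "?b r = p \<or> ?b r = q"
      using pq blk_bounds[OF ix, of d ns r] by auto
    then show "M $ i $ r * N $ r $ j = 0"
      using M_diag N_diag by (auto simp: p_def q_def)
  qed (simp_all add: p_def q_def)
  have "Zmat d ns ix Lam X k $ i $ j
      = - ((\<Sum>l\<in>?L. ?B X p l ** ?B Lam l q) $ i $ j + (\<Sum>l\<in>?L. ?B Lam p l ** ?B X l q) $ i $ j)"
    unfolding Z T by (simp add: sum.distrib)
  also have "\<dots> = - (X ** Lam + Lam ** X) $ i $ j"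
    by (simp only: S[OF X_diag Lam_diag] S[OF Lam_diag X_diag] vector_add_component)
  finally show ?thesis
    using True by simp
next
  case False
  then show ?thesis
    unfolding Zmat_def Let_def vec_lambda_beta by (simp only: de_Morgan_disj simp_thms if_False)
qed

lemma Jmat_sandwich_sum_entry:
  fixes Lam X :: "real^'n^'n"
  assumes Lam_diag: "\<And>a b. blk d ns ix a = blk d ns ix b \<Longrightarrow> Lam $ a $ b = 0"
    and X_diag: "\<And>a b. blk d ns ix a = blk d ns ix b \<Longrightarrow> X $ a $ b = 0"
    and ij: "blk d ns ix i = k \<or> blk d ns ix j = k"
  shows "(Lam ** Jmat d ns ix k ** X + X ** Jmat d ns ix k ** Lam) $ i $ j
    = - (X ** Lam + Lam ** X) $ i $ j"
proof -
  have "M $ i $ r * N $ r $ j = 0"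
    if "\<And>a b. blk d ns ix a = blk d ns ix b \<Longrightarrow> M $ a $ b = 0"
      and "\<And>a b. blk d ns ix a = blk d ns ix b \<Longrightarrow> N $ a $ b = 0"
      and "blk d ns ix r = k" for M N :: "real^'n^'n" and r
    using ij that by auto
  then show ?thesis
    using Lam_diag X_diag by (simp add: Jmat_sandwich_entry)
qed

lemma Zmat_in_tangent_space_flag:
  fixes V Lam X :: "real^'n^'n"
  assumes ix: "bij_betw ix UNIV {..<CARD('n)}" and V: "orthogonal_matrix V"
    and Lam_skew: "transpose Lam = - Lam" and X_skew: "transpose X = - X"
    and Lam_diag: "\<And>a b. blk d ns ix a = blk d ns ix b \<Longrightarrow> Lam $ a $ b = 0"
    and X_diag: "\<And>a b. blk d ns ix a = blk d ns ix b \<Longrightarrow> X $ a $ b = 0"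
  shows "conj_tuple d V (Zmat d ns ix Lam X)
    \<in> tangent_space (flag d ns ix) (conj_tuple d V (Jmat d ns ix))"
proof -
  let ?b = "blk d ns ix"
  define G where "G = X ** Lam + Lam ** X"
  have "transpose G = G"
    using Lam_skew X_skew
    by (simp add: G_def matrix_transpose_add matrix_transpose_mul matrix_mult.minus_left
        matrix_mult.minus_right add.commute)
  then have G_sym: "G $ j $ i = G $ i $ j" for i j
    by (metis transpose_def vec_lambda_beta)
  define Om :: "real^'n^'n" where
    "Om = (\<chi> i j. ((if ?b j = d+1 then 1 else 0) - (if ?b i = d+1 then 1 else 0)) * G $ i $ j / 2)"
  have "transpose Om = - Om"
    by (simp add: Om_def transpose_def vec_eq_iff G_sym algebra_simps)
  moreover have "Om ** Jmat d ns ix k - Jmat d ns ix k ** Om = Zmat d ns ix Lam X k"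
    if k: "k \<in> {1..d}" for k
  proof -
    have "Zmat d ns ix Lam X k $ i $ j =
      (if ?b i = k \<and> ?b j = d+1 \<or> ?b i = d+1 \<and> ?b j = k then - G $ i $ j else 0)" for i j
      unfolding G_def by (rule Zmat_entry[OF ix k Lam_skew X_skew Lam_diag X_diag])
    then show ?thesis
      using k by (auto simp: vec_eq_iff matrix_mult_Jmat_entry Jmat_matrix_mult_entry Om_def)
  qed
  ultimately show ?thesis
    using commutator_in_tangent_space_flag[OF V, of Om d ns ix]
    by (simp add: conj_tuple_def cong: if_cong)
qed

lemma Zmat_residual_orthogonal:
  fixes V Lam X :: "real^'n^'n"
  assumes ix: "bij_betw ix UNIV {..<CARD('n)}" and V: "orthogonal_matrix V"
    and Lam_skew: "transpose Lam = - Lam" and X_skew: "transpose X = - X"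
    and Lam_diag: "\<And>a b. blk d ns ix a = blk d ns ix b \<Longrightarrow> Lam $ a $ b = 0"
    and X_diag: "\<And>a b. blk d ns ix a = blk d ns ix b \<Longrightarrow> X $ a $ b = 0"
    and u: "u \<in> tangent_space (flag d ns ix) (conj_tuple d V (Jmat d ns ix))"
  shows "tup_inner d (conj_tuple d V (\<lambda>k. Lam ** Jmat d ns ix k ** X + X ** Jmat d ns ix k ** Lam)
    - conj_tuple d V (Zmat d ns ix Lam X)) u = 0"
proof -
  let ?b = "blk d ns ix"
  define D where "D k = Lam ** Jmat d ns ix k ** X + X ** Jmat d ns ix k ** Lam - Zmat d ns ix Lam X k"
    for k
  define E where "E k = transpose V ** u k ** V" for k
  have "tup_inner d (conj_tuple d V (\<lambda>k. Lam ** Jmat d ns ix k ** X + X ** Jmat d ns ix k ** Lam)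
      - conj_tuple d V (Zmat d ns ix Lam X)) u = (\<Sum>k=1..d. inner (D k) (E k))"
    unfolding tup_inner_def
    by (intro sum.cong refl)
      (simp add: conj_tuple_def D_def E_def inner_matrix_mult_sandwich inner_diff_left)
  also have "\<dots> = (\<Sum>k=1..d. \<Sum>i\<in>UNIV. \<Sum>j\<in>UNIV. D k $ i $ j * E k $ i $ j)"
    by (simp add: inner_matrix_entries)
  also have "\<dots> = (\<Sum>i\<in>UNIV. \<Sum>k=1..d. \<Sum>j\<in>UNIV. D k $ i $ j * E k $ i $ j)"
    by (rule sum.swap)
  also have "\<dots> = (\<Sum>i\<in>UNIV. \<Sum>j\<in>UNIV. \<Sum>k=1..d. D k $ i $ j * E k $ i $ j)"
    by (intro sum.cong refl sum.swap)
  also have "\<dots> = 0"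
  proof (rule sum.neutral, rule ballI, rule sum.neutral, rule ballI)
    fix i j
    have D_entry: "D k $ i $ j = - (X ** Lam + Lam ** X) $ i $ j - Zmat d ns ix Lam X k $ i $ j"
      if "?b i = k \<or> ?b j = k" for k
      using Jmat_sandwich_sum_entry[OF Lam_diag X_diag that]
      by (simp only: D_def vector_minus_component)
    note Z_entry = Zmat_entry[OF ix _ Lam_skew X_skew Lam_diag X_diag]
    show "(\<Sum>k=1..d. D k $ i $ j * E k $ i $ j) = 0"
    proof (rule sum_block_pairing_eq_zero[where p = "?b i" and q = "?b j"])
      show "?b i \<in> {1..d+1}" "?b j \<in> {1..d+1}"
        using blk_bounds[OF ix] by blast+
      show "E k $ i $ j = 0" if "k \<in> {1..d}" "?b i = k \<longleftrightarrow> ?b j = k" for k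
        unfolding E_def
        by (rule anticommute_Jmat_entry[OF tangent_space_flag_anticommute[OF V u that(1)] that(2)])
      have pair_bounds: "?b i \<in> {1..d}" "?b j \<in> {1..d}" if "?b i \<le> d" "?b j \<le> d"
        using that blk_bounds[OF ix, of d ns] by auto
      show "E (?b i) $ i $ j + E (?b j) $ i $ j = 0" if "?b i \<noteq> ?b j" "?b i \<le> d" "?b j \<le> d"
        unfolding E_def
        using tangent_space_flag_pair[OF V u pair_bounds[OF that(2,3)] that(1)]
        by (rule Jmat_plus_one_pair_entry) simp_all
      show "D (?b i) $ i $ j = D (?b j) $ i $ j" if "?b i \<noteq> ?b j" "?b i \<le> d" "?b j \<le> d"
        using pair_bounds[OF that(2,3)] that(1) by (simp add: D_entry Z_entry)
      show "D k $ i $ j = 0" if "k \<in> {1..d}" "?b i = k \<and> ?b j = d+1 \<or> ?b i = d+1 \<and> ?b j = k"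
        for k
        using that by (auto simp: D_entry Z_entry)
    qed
  qed
  finally show ?thesis .
qed

lemma orth_proj_tangent_space_flag:
  fixes V Lam X :: "real^'n^'n"
  assumes ix: "bij_betw ix UNIV {..<CARD('n)}" and V: "orthogonal_matrix V"
    and Lam_skew: "transpose Lam = - Lam" and X_skew: "transpose X = - X"
    and Lam_diag: "\<And>a b. blk d ns ix a = blk d ns ix b \<Longrightarrow> Lam $ a $ b = 0"
    and X_diag: "\<And>a b. blk d ns ix a = blk d ns ix b \<Longrightarrow> X $ a $ b = 0"
  shows "orth_proj d (tangent_space (flag d ns ix) (conj_tuple d V (Jmat d ns ix)))
      (conj_tuple d V (\<lambda>k. Lam ** Jmat d ns ix k ** X + X ** Jmat d ns ix k ** Lam))
    = conj_tuple d V (Zmat d ns ix Lam X)"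
  using assms by (intro orth_proj_eqI Zmat_in_tangent_space_flag Zmat_residual_orthogonal)
    (auto intro: tangent_space_flag_vanishes)

theorem lemmaA2:
  fixes d :: nat and ns :: "nat \<Rightarrow> nat" and ix :: "'n::finite \<Rightarrow> nat"
    and V V' Lam X :: "real \<Rightarrow> real^'n^'n"
  assumes ix: "bij_betw ix UNIV {..<CARD('n)}"
    and d: "1 \<le> d"
    and ns_pos: "0 < ns 1"
    and ns_mono: "\<forall>k. 1 \<le> k \<and> k < d \<longrightarrow> ns k < ns (Suc k)"
    and ns_lt: "ns d < CARD('n)"
    and V_orth: "\<forall>t. orthogonal_matrix (V t)"
    and V_deriv: "\<forall>t. (V has_vector_derivative V' t) (at t)"
    and Lam_def: "\<forall>t. Lam t = transpose (V t) ** V' t"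
    and Lam_diag: "\<forall>t k. k \<in> {1..d+1} \<longrightarrow> blockM d ns ix (Lam t) k k = 0"
    and X_diff: "\<forall>t. X differentiable (at t)"
    and X_skew: "\<forall>t. transpose (X t) = - X t"
    and X_diag: "\<forall>t k. k \<in> {1..d+1} \<longrightarrow> blockM d ns ix (X t) k k = 0"
  shows "\<forall>t. orth_proj d
              (tangent_space (flag d ns ix) (conj_tuple d (V t) (Jmat d ns ix)))
              (conj_tuple d (V t) (\<lambda>k. Lam t ** Jmat d ns ix k ** X t + X t ** Jmat d ns ix k ** Lam t))
           = conj_tuple d (V t) (Zmat d ns ix (Lam t) (X t))"
proof (intro allI orth_proj_tangent_space_flag[OF ix])
  fix t
  have diag_entry: "M t $ a $ b = 0"
    if "\<forall>t k. k \<in> {1..d+1} \<longrightarrow> blockM d ns ix (M t) k k = 0" "blk d ns ix a = blk d ns ix b"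
    for M :: "real \<Rightarrow> real^'n^'n" and a b
    using that blk_bounds[OF ix] by (metis blockM_entry_eq_zero)
  show "orthogonal_matrix (V t)" "transpose (X t) = - X t"
    using V_orth X_skew by blast+
  show "transpose (Lam t) = - Lam t"
    using orthogonal_curve_skew[of V, OF _ V_deriv[rule_format, of t]] V_orth Lam_def by simp
  show "Lam t $ a $ b = 0" "X t $ a $ b = 0" if "blk d ns ix a = blk d ns ix b" for a b
    using diag_entry[OF Lam_diag that] diag_entry[OF X_diag that] by blast+
qed

end
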